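(* Let $k\ge1$, $i\in\{1,\dots,k\}$, and let $s_i^k$ be the $i$-th row of $G_k^\alpha$. For every $j\in\{0,1,\dots,s-1\}$, the vector $\gamma^js_i^k$ contains every element of the ideal $\langle\gamma^j\rangle$ exactly $q^{j+s(k-1)}$ times among its coordinates.
   Context: Let $R$ be a finite commutative chain ring with maximal ideal $\langle\gamma\rangle$, nilpotency index $s$ (least $s$ with $\gamma^s=0$) and residue field $R/\langle\gamma\rangle\cong\mathbb{F}_q$. Fix coset representatives $T=\{e_0,\dots,e_{q-1}\}$ with $e_0=0,e_1=1$, ordered $e_0<\dots<e_{q-1}$; each $r\in R$ is uniquely $\sum_{i=0}^{s-1}r_i\gamma^i$, $r_i\in T$; order $R$ by $x>y$ iff $x_i>y_i$ in $T$ for the largest $i$ with $x_i\neq y_i$; list $R=\{\rho_0,\dots,\rho_{q^s-1}\}$ increasingly. $\mathbf{a}^{(m)}$ is the constant vector of length $m$. Define $G_1^\alpha=(\rho_0\ \cdots\ \rho_{q^s-1})$ and, for $k>1$, $G_k^\alpha$ as the $k\times q^{sk}$ matrix of $q^s$ column blocks, the $j$-th having first row $\boldsymbol{\rho_j}^{(q^{s(k-1)})}$ and $G_{k-1}^\alpha$ below. *)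

theory Defs
  imports Main
begin

definition is_ideal :: "'a::comm_ring_1 set \<Rightarrow> bool" where
  "is_ideal I \<longleftrightarrow> 0 \<in> I \<and> (\<forall>x\<in>I. \<forall>y\<in>I. x + y \<in> I) \<and> (\<forall>r. \<forall>x\<in>I. r * x \<in> I)"

definition pideal :: "'a::comm_ring_1 \<Rightarrow> 'a set" where
  "pideal a = range (\<lambda>y. a * y)"

definition chain_ring :: "'a::comm_ring_1 itself \<Rightarrow> bool" where
  "chain_ring _ \<longleftrightarrow> (\<forall>I J :: 'a set. is_ideal I \<longrightarrow> is_ideal J \<longrightarrow> I \<subseteq> J \<or> J \<subseteq> I)"

definition maximal_ideal :: "'a::comm_ring_1 set \<Rightarrow> bool" where
  "maximal_ideal M \<longleftrightarrow> is_ideal M \<and> M \<noteq> UNIV \<and>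
     (\<forall>J. is_ideal J \<longrightarrow> M \<subseteq> J \<longrightarrow> J = M \<or> J = UNIV)"

definition digits :: "'a::comm_ring_1 set \<Rightarrow> 'a \<Rightarrow> nat \<Rightarrow> 'a \<Rightarrow> 'a list" where
  "digits T \<gamma> s r = (THE ds. length ds = s \<and> set ds \<subseteq> T \<and> r = (\<Sum>i<s. ds ! i * \<gamma> ^ i))"

definition T_less :: "(nat \<Rightarrow> 'a) \<Rightarrow> nat \<Rightarrow> 'a \<Rightarrow> 'a \<Rightarrow> bool" where
  "T_less e q a b \<longleftrightarrow> (\<exists>m n. m < n \<and> n < q \<and> a = e m \<and> b = e n)"

definition R_less :: "(nat \<Rightarrow> 'a::comm_ring_1) \<Rightarrow> nat \<Rightarrow> 'a \<Rightarrow> nat \<Rightarrow> 'a \<Rightarrow> 'a \<Rightarrow> bool" where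
  "R_less e q \<gamma> s y x \<longleftrightarrow>
     (let dx = digits (e ` {..<q}) \<gamma> s x; dy = digits (e ` {..<q}) \<gamma> s y in
      \<exists>i<s. dx ! i \<noteq> dy ! i \<and> T_less e q (dy ! i) (dx ! i) \<and>
            (\<forall>l. i < l \<and> l < s \<longrightarrow> dx ! l = dy ! l))"

text \<open>rho_j: the j-th element of R in increasing order (exactly j elements below it).\<close>
definition rho :: "(nat \<Rightarrow> 'a::{comm_ring_1,finite}) \<Rightarrow> nat \<Rightarrow> 'a \<Rightarrow> nat \<Rightarrow> nat \<Rightarrow> 'a" where
  "rho e q \<gamma> s j = (THE x. card {y. R_less e q \<gamma> s y x} = j)"

text \<open>Entries of G_k^alpha: Gmat rh N k r c is the entry in row r (1 \<le> r \<le> k) and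
  column c (c < N^k) of G_k, where rh enumerates R and N = |R| = q^s.
  G_1 = (rho_0 ... rho_{N-1}); G_k consists of N column blocks of width N^(k-1),
  the j-th having first row rho_j repeated and G_{k-1} below.\<close>
fun Gmat :: "(nat \<Rightarrow> 'a) \<Rightarrow> nat \<Rightarrow> nat \<Rightarrow> nat \<Rightarrow> nat \<Rightarrow> 'a" where
  "Gmat rh N 0 r c = undefined"
| "Gmat rh N (Suc k) r c =
     (if k = 0 then rh c
      else if r = 1 then rh (c div N ^ k)
      else Gmat rh N k (r - 1) (c mod N ^ k))"

end

(*
  Unwinding the recursion, row i of G_k lists rho_0, ..., rho_(N-1), each repeated N^(k-i)
  times, and repeats this pattern N^(i-1) times, where N = q^s. Since gamma-adic expansions
  with digits in T exist and are unique, |R| = q^s, and R_less is the colexicographic order on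
  digit strings, a strict linear order, so rho enumerates R. Hence every element of R occurs
  N^(k-1) times in each row, and the count in question is N^(k-1) times the size of a fibre of
  r |-> gamma^j r over the ideal generated by gamma^j. Such a fibre is a coset of the
  annihilator of gamma^j, which consists of the elements whose s - j lowest digits vanish,
  so it has q^j elements.
*)
theory Submission
  imports Defs
begin

lemma card_divmod:
  assumes "(M::nat) > 0"
  shows "card {c. c < N * M \<and> Q (c div M) (c mod M)} = card {(a, b). a < N \<and> b < M \<and> Q a b}"
proof (rule bij_betw_same_card[of "\<lambda>c. (c div M, c mod M)"],
       rule bij_betw_byWitness[where f' = "\<lambda>(a, b). a * M + b"])
  show "(\<lambda>(a, b). a * M + b) ` {(a, b). a < N \<and> b < M \<and> Q a b}
      \<subseteq> {c. c < N * M \<and> Q (c div M) (c mod M)}"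
  proof safe
    fix a b assume ab: "a < N" "b < M" "Q a b"
    have "a * M + b < Suc a * M" using ab by simp
    also have "\<dots> \<le> N * M" using ab by (intro mult_right_mono) auto
    finally show "a * M + b < N * M" .
    show "Q ((a * M + b) div M) ((a * M + b) mod M)" using ab by simp
  qed
qed (use assms in \<open>auto simp: less_mult_imp_div_less\<close>)

lemma card_less_mult_div:
  assumes "(M::nat) > 0"
  shows "card {c. c < N * M \<and> P (c div M)} = card {a. a < N \<and> P a} * M"
proof -
  have "{(a, b). a < N \<and> b < M \<and> P a} = {a. a < N \<and> P a} \<times> {..<M}"
    by auto
  then show ?thesis
    using card_divmod[OF assms, of N "\<lambda>a b. P a"] by (simp add: card_cartesian_product)
qed

lemma card_less_mult_mod:
  assumes "(M::nat) > 0"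
  shows "card {c. c < N * M \<and> P (c mod M)} = N * card {b. b < M \<and> P b}"
proof -
  have "{(a, b). a < N \<and> b < M \<and> P b} = {..<N} \<times> {b. b < M \<and> P b}"
    by auto
  then show ?thesis
    using card_divmod[OF assms, of N "\<lambda>a b. P b"] by (simp add: card_cartesian_product)
qed

lemma card_Gmat_row:
  assumes "(N::nat) > 0" "1 \<le> i" "i \<le> k"
  shows "card {c. c < N ^ k \<and> P (Gmat rh N k i c)} = N ^ (k - 1) * card {m. m < N \<and> P (rh m)}"
  using assms(2,3)
proof (induction k arbitrary: i)
  case 0
  then show ?case by simp
next
  case (Suc k)
  have block: "N ^ k > 0" using assms(1) by simp
  show ?case
  proof (cases "k = 0 \<or> i = 1")
    case True
    then have "Gmat rh N (Suc k) i c = rh (c div N ^ k)" for c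
      by auto
    then show ?thesis
      using card_less_mult_div[OF block, of N "\<lambda>a. P (rh a)"] by (simp add: mult.commute)
  next
    case False
    have "card {c. c < N ^ Suc k \<and> P (Gmat rh N (Suc k) i c)}
        = card {c. c < N * N ^ k \<and> P (Gmat rh N k (i - 1) (c mod N ^ k))}"
      using False by simp
    also have "\<dots> = N * card {c. c < N ^ k \<and> P (Gmat rh N k (i - 1) c)}"
      by (rule card_less_mult_mod[OF block])
    also have "\<dots> = N * (N ^ (k - 1) * card {m. m < N \<and> P (rh m)})"
      using Suc.prems False by (subst Suc.IH) auto
    finally show ?thesis
      using False by (cases k) simp_all
  qed
qed

definition colex_less :: "('b \<Rightarrow> 'b \<Rightarrow> bool) \<Rightarrow> nat \<Rightarrow> 'b list \<Rightarrow> 'b list \<Rightarrow> bool" where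
  "colex_less lt n xs ys \<longleftrightarrow> (\<exists>i<n. lt (xs ! i) (ys ! i) \<and> (\<forall>l. i < l \<and> l < n \<longrightarrow> xs ! l = ys ! l))"

lemma colex_less_irrefl:
  assumes "\<And>a. \<not> lt a a"
  shows "\<not> colex_less lt n xs xs"
  using assms by (auto simp: colex_less_def)

lemma colex_less_trans:
  assumes trans: "\<And>a b c. lt a b \<Longrightarrow> lt b c \<Longrightarrow> lt a c"
    and "colex_less lt n xs ys" "colex_less lt n ys zs"
  shows "colex_less lt n xs zs"
proof -
  obtain i1 where i1: "i1 < n" "lt (xs ! i1) (ys ! i1)" "\<forall>l. i1 < l \<and> l < n \<longrightarrow> xs ! l = ys ! l"
    using assms(2) by (auto simp: colex_less_def)
  obtain i2 where i2: "i2 < n" "lt (ys ! i2) (zs ! i2)" "\<forall>l. i2 < l \<and> l < n \<longrightarrow> ys ! l = zs ! l"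
    using assms(3) by (auto simp: colex_less_def)
  have "lt (xs ! max i1 i2) (zs ! max i1 i2)"
    using i1 i2 trans by (cases i1 i2 rule: linorder_cases) (auto simp: max_def)
  moreover have "\<forall>l. max i1 i2 < l \<and> l < n \<longrightarrow> xs ! l = zs ! l"
    using i1 i2 by simp
  ultimately show ?thesis
    using i1 i2 unfolding colex_less_def by (intro exI[of _ "max i1 i2"]) (simp add: max_def)
qed

lemma colex_less_total:
  assumes total: "\<And>a b. a \<in> A \<Longrightarrow> b \<in> A \<Longrightarrow> a \<noteq> b \<Longrightarrow> lt a b \<or> lt b a"
    and xs: "length xs = n" "set xs \<subseteq> A" and ys: "length ys = n" "set ys \<subseteq> A"
    and "xs \<noteq> ys"
  shows "colex_less lt n xs ys \<or> colex_less lt n ys xs"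
proof -
  define S where "S = {l. l < n \<and> xs ! l \<noteq> ys ! l}"
  have "finite S" by (simp add: S_def)
  have "S \<noteq> {}"
  proof
    assume "S = {}"
    then have "xs = ys" using xs ys by (auto simp: S_def intro: nth_equalityI)
    with \<open>xs \<noteq> ys\<close> show False ..
  qed
  define i where "i = Max S"
  have i: "i < n" "xs ! i \<noteq> ys ! i"
    using Max_in[OF \<open>finite S\<close> \<open>S \<noteq> {}\<close>] by (auto simp: i_def S_def)
  have above: "\<forall>l. i < l \<and> l < n \<longrightarrow> xs ! l = ys ! l"
  proof (intro allI impI)
    fix l assume l: "i < l \<and> l < n"
    then have "l \<notin> S" using Max_ge[OF \<open>finite S\<close>, of l] by (auto simp: i_def)
    then show "xs ! l = ys ! l" using l by (simp add: S_def)
  qed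
  have "xs ! i \<in> A" "ys ! i \<in> A"
    using i xs ys by (auto intro: nth_mem)
  then have "lt (xs ! i) (ys ! i) \<or> lt (ys ! i) (xs ! i)"
    using total[OF _ _ i(2)] by blast
  then show ?thesis
    using i(1) above unfolding colex_less_def by (metis (no_types))
qed

lemma card_preimage_enum_by_rank:
  fixes less :: "'a::finite \<Rightarrow> 'a \<Rightarrow> bool"
  assumes irrefl: "\<And>x. \<not> less x x"
    and trans: "\<And>x y z. less x y \<Longrightarrow> less y z \<Longrightarrow> less x z"
    and total: "\<And>x y. x \<noteq> y \<Longrightarrow> less x y \<or> less y x"
  shows "card {m. m < card (UNIV :: 'a set) \<and> P (THE x. card {y. less y x} = m)} = card {x. P x}"
proof -
  define rank where "rank x = card {y. less y x}" for x
  have rank_less: "rank x < rank y" if "less x y" for x y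
  proof -
    have "{z. less z x} \<subset> {z. less z y}"
      using that trans irrefl by blast
    then show ?thesis unfolding rank_def by (simp add: psubset_card_mono)
  qed
  have "inj rank"
  proof (rule injI, rule ccontr)
    fix x y assume "rank x = rank y" "x \<noteq> y"
    then show False using total[of x y] rank_less by force
  qed
  have rank_lt: "rank x < card (UNIV :: 'a set)" for x
  proof -
    have "rank x \<le> card (UNIV - {x})"
      unfolding rank_def by (rule card_mono) (use irrefl in auto)
    also have "\<dots> < card (UNIV :: 'a set)"
      by (rule card_Diff1_less) simp_all
    finally show ?thesis .
  qed
  have enum_rank: "(THE x'. rank x' = rank x) = x" for x
    by (rule the_equality) (simp_all add: inj_eq[OF \<open>inj rank\<close>])
  have "rank ` UNIV = {..<card (UNIV :: 'a set)}"
    using card_image[OF \<open>inj rank\<close>] rank_lt by (intro card_subset_eq) auto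
  then have rank_enum: "rank (THE x. rank x = m) = m" if "m < card (UNIV :: 'a set)" for m
    using that enum_rank by (metis imageE lessThan_iff)
  have "bij_betw (\<lambda>m. THE x. rank x = m)
      {m. m < card (UNIV :: 'a set) \<and> P (THE x. rank x = m)} {x. P x}"
    by (rule bij_betw_byWitness[where f' = rank]) (auto simp: rank_enum enum_rank rank_lt)
  then show ?thesis
    unfolding rank_def by (rule bij_betw_same_card)
qed

lemma pideal_iff_dvd [simp]: "x \<in> pideal a \<longleftrightarrow> a dvd x"
  by (auto simp: pideal_def dvd_def)

lemma is_ideal_pideal: "is_ideal (pideal a)"
  by (auto simp: is_ideal_def)

lemma not_dvd_imp_unit:
  fixes \<gamma> u :: "'a::comm_ring_1"
  assumes "chain_ring TYPE('a)" "maximal_ideal (pideal \<gamma>)" "\<not> \<gamma> dvd u"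
  shows "u dvd 1"
proof -
  have "u \<in> pideal u" "u \<notin> pideal \<gamma>"
    using assms(3) by simp_all
  then have "pideal \<gamma> \<subseteq> pideal u"
    using assms(1) is_ideal_pideal unfolding chain_ring_def by blast
  then have "pideal u = UNIV"
    using assms(2) is_ideal_pideal \<open>u \<in> pideal u\<close> \<open>u \<notin> pideal \<gamma>\<close>
    unfolding maximal_ideal_def by blast
  then show ?thesis
    by (metis UNIV_I pideal_iff_dvd)
qed

locale chain_ring_digits =
  fixes \<gamma> :: "'a::{comm_ring_1,finite}" and s q :: nat and e :: "nat \<Rightarrow> 'a"
  assumes chain: "chain_ring TYPE('a)"
    and maximal: "maximal_ideal (pideal \<gamma>)"
    and nilpotent: "\<gamma> ^ s = 0"
    and pow_nonzero: "\<forall>t<s. \<gamma> ^ t \<noteq> 0"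
    and e_inj: "inj_on e {..<q}"
    and reps: "\<forall>x. \<exists>!t. t \<in> e ` {..<q} \<and> x - t \<in> pideal \<gamma>"
    and e0: "e 0 = 0"
begin

abbreviation T :: "'a set" where "T \<equiv> e ` {..<q}"

lemma q_pos: "q > 0"
  using reps by (metis empty_iff image_empty lessThan_0 neq0_conv)

lemma zero_in_T: "0 \<in> T"
  using q_pos e0 by force

lemma T_eq_if_dvd_diff:
  assumes "a \<in> T" "b \<in> T" "\<gamma> dvd a - b"
  shows "a = b"
proof -
  have "\<exists>!t. t \<in> T \<and> \<gamma> dvd a - t" "a \<in> T \<and> \<gamma> dvd a - a"
    using reps assms(1) by simp_all
  then show ?thesis
    using assms(2,3) by (metis the1_equality)
qed

definition T_lists :: "nat \<Rightarrow> 'a list set" where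
  "T_lists n = {ds. set ds \<subseteq> T \<and> length ds = n}"

lemma card_T_lists: "card (T_lists n) = q ^ n"
  using card_lists_length_eq[of T n] e_inj by (simp add: T_lists_def card_image)

definition adic_value :: "'a list \<Rightarrow> 'a" where
  "adic_value ds = (\<Sum>i<length ds. ds ! i * \<gamma> ^ i)"

lemma adic_value_Nil [simp]: "adic_value [] = 0"
  by (simp add: adic_value_def)

lemma adic_value_Cons [simp]: "adic_value (t # ds) = t + \<gamma> * adic_value ds"
  unfolding adic_value_def length_Cons sum.lessThan_Suc_shift
  by (simp add: sum_distrib_left mult_ac)

lemma adic_value_append:
  "adic_value (us @ ts) = adic_value us + \<gamma> ^ length us * adic_value ts"
  by (induction us) (simp_all add: algebra_simps)

lemma adic_value_replicate_0 [simp]: "adic_value (replicate n 0) = 0"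
  by (induction n) simp_all

lemma adic_value_cancel:
  assumes "set ds \<subseteq> T" "set ds' \<subseteq> T" "length ds = length ds'" "m + length ds \<le> s"
    and "\<gamma> ^ m * adic_value ds = \<gamma> ^ m * adic_value ds'"
  shows "ds = ds'"
  using assms
proof (induction ds arbitrary: ds' m)
  case Nil
  then show ?case by simp
next
  case (Cons t ds)
  then obtain t' ds'' where ds': "ds' = t' # ds''"
    by (cases ds') auto
  have "t = t'"
  proof (rule ccontr)
    define u where "u = (t - t') + \<gamma> * (adic_value ds - adic_value ds'')"
    assume "t \<noteq> t'"
    then have "\<not> \<gamma> dvd t - t'"
      using T_eq_if_dvd_diff[of t t'] Cons.prems(1,2) ds' by auto
    then have "\<not> \<gamma> dvd u"
      by (simp add: u_def dvd_add_left_iff)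
    then have "u dvd 1"
      by (rule not_dvd_imp_unit[OF chain maximal])
    then obtain w where "1 = u * w" ..
    then have "\<gamma> ^ m = \<gamma> ^ m * u * w"
      by (simp add: mult.assoc)
    also have "\<gamma> ^ m * u = 0"
      using Cons.prems(5) ds' by (simp add: u_def algebra_simps)
    finally have "\<gamma> ^ m = 0"
      by simp
    moreover have "m < s"
      using Cons.prems(4) by simp
    ultimately show False
      using pow_nonzero by blast
  qed
  then have "\<gamma> ^ Suc m * adic_value ds = \<gamma> ^ Suc m * adic_value ds''"
    using Cons.prems(5) ds' by (simp add: algebra_simps)
  then have "ds = ds''"
    using Cons.IH[of ds'' "Suc m"] Cons.prems ds' by simp
  then show ?case
    using \<open>t = t'\<close> ds' by simp
qed

lemma adic_value_approx: "\<exists>ds. set ds \<subseteq> T \<and> length ds = n \<and> \<gamma> ^ n dvd r - adic_value ds"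
proof (induction n arbitrary: r)
  case 0
  show ?case by simp
next
  case (Suc n)
  obtain t where t: "t \<in> T" "\<gamma> dvd r - t"
    using ex1_implies_ex[OF reps[rule_format, of r]] by auto
  then obtain r' where r': "r - t = \<gamma> * r'"
    by (auto simp: dvd_def)
  obtain ds where ds: "set ds \<subseteq> T" "length ds = n" "\<gamma> ^ n dvd r' - adic_value ds"
    using Suc.IH by blast
  have "r - adic_value (t # ds) = \<gamma> * (r' - adic_value ds)"
    using r' by (simp add: algebra_simps)
  also have "\<gamma> ^ Suc n dvd \<dots>"
    using ds(3) by (simp add: mult_dvd_mono)
  finally show ?case
    using t ds by (intro exI[of _ "t # ds"]) simp
qed

lemma bij_betw_adic_value: "bij_betw adic_value (T_lists s) UNIV"
proof (rule bij_betw_imageI)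
  show "inj_on adic_value (T_lists s)"
  proof (rule inj_onI)
    fix ds ds' assume "ds \<in> T_lists s" "ds' \<in> T_lists s" "adic_value ds = adic_value ds'"
    then show "ds = ds'"
      using adic_value_cancel[of ds ds' 0] by (simp add: T_lists_def)
  qed
  have "r \<in> adic_value ` T_lists s" for r
  proof -
    obtain ds where ds: "set ds \<subseteq> T" "length ds = s" "\<gamma> ^ s dvd r - adic_value ds"
      using adic_value_approx by blast
    then have "r = adic_value ds"
      using nilpotent by simp
    then show ?thesis
      using ds by (intro image_eqI) (simp_all add: T_lists_def)
  qed
  then show "adic_value ` T_lists s = UNIV"
    by blast
qed

lemma card_UNIV_eq: "card (UNIV :: 'a set) = q ^ s"
  using bij_betw_same_card[OF bij_betw_adic_value] card_T_lists by simp

lemma digits_in_T_lists: "digits T \<gamma> s r \<in> T_lists s"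
  and adic_value_digits: "adic_value (digits T \<gamma> s r) = r"
proof -
  obtain ds where ds: "ds \<in> T_lists s" "adic_value ds = r"
    using bij_betw_imp_surj_on[OF bij_betw_adic_value] by (metis UNIV_I imageE)
  have "digits T \<gamma> s r = ds"
    unfolding digits_def
  proof (rule the_equality)
    show "length ds = s \<and> set ds \<subseteq> T \<and> r = (\<Sum>i<s. ds ! i * \<gamma> ^ i)"
      using ds by (auto simp: T_lists_def adic_value_def)
  next
    fix ds' assume "length ds' = s \<and> set ds' \<subseteq> T \<and> r = (\<Sum>i<s. ds' ! i * \<gamma> ^ i)"
    then have "ds' \<in> T_lists s" "adic_value ds' = adic_value ds"
      using ds by (auto simp: T_lists_def adic_value_def)
    then show "ds' = ds"
      using inj_onD[OF bij_betw_imp_inj_on[OF bij_betw_adic_value]] ds(1) by blast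
  qed
  then show "digits T \<gamma> s r \<in> T_lists s" "adic_value (digits T \<gamma> s r) = r"
    using ds by simp_all
qed

lemma T_less_irrefl: "\<not> T_less e q a a"
  using e_inj by (auto simp: T_less_def dest: inj_onD)

lemma T_less_trans:
  assumes "T_less e q a b" "T_less e q b c"
  shows "T_less e q a c"
proof -
  obtain m n where mn: "m < n" "n < q" "a = e m" "b = e n"
    using assms(1) by (auto simp: T_less_def)
  obtain n' p where n'p: "n' < p" "p < q" "b = e n'" "c = e p"
    using assms(2) by (auto simp: T_less_def)
  have "n' = n"
    using e_inj mn n'p by (auto dest: inj_onD)
  then show ?thesis
    unfolding T_less_def using mn n'p by (intro exI[of _ m] exI[of _ p]) simp
qed

lemma T_less_total:
  assumes "a \<in> T" "b \<in> T" "a \<noteq> b"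
  shows "T_less e q a b \<or> T_less e q b a"
  using assms by (auto simp: T_less_def) (metis linorder_neqE_nat)

lemma R_less_iff_colex_less:
  "R_less e q \<gamma> s y x \<longleftrightarrow> colex_less (T_less e q) s (digits T \<gamma> s y) (digits T \<gamma> s x)"
  unfolding R_less_def colex_less_def Let_def using T_less_irrefl by fastforce

lemma card_rho_preimage: "card {m. m < q ^ s \<and> P (rho e q \<gamma> s m)} = card {r. P r}"
proof -
  have "card {m. m < card (UNIV :: 'a set) \<and> P (THE x. card {y. R_less e q \<gamma> s y x} = m)}
      = card {r. P r}"
  proof (rule card_preimage_enum_by_rank)
    show "\<not> R_less e q \<gamma> s x x" for x
      using colex_less_irrefl[of "T_less e q"] T_less_irrefl by (simp add: R_less_iff_colex_less)
    show "R_less e q \<gamma> s x z" if "R_less e q \<gamma> s x y" "R_less e q \<gamma> s y z" for x y z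
      using that colex_less_trans[OF T_less_trans] by (simp add: R_less_iff_colex_less)
    show "R_less e q \<gamma> s x y \<or> R_less e q \<gamma> s y x" if "x \<noteq> y" for x y
    proof -
      have "digits T \<gamma> s x \<noteq> digits T \<gamma> s y"
        using that adic_value_digits by metis
      show ?thesis
        unfolding R_less_iff_colex_less
      proof (rule colex_less_total[of T])
        show "T_less e q a b \<or> T_less e q b a" if "a \<in> T" "b \<in> T" "a \<noteq> b" for a b
          using T_less_total that .
      qed (use digits_in_T_lists \<open>digits T \<gamma> s x \<noteq> digits T \<gamma> s y\<close>
          in \<open>auto simp: T_lists_def\<close>)
    qed
  qed
  then show ?thesis
    by (simp add: card_UNIV_eq rho_def)
qed

lemma annihilator_pow_eq:
  assumes "j \<le> s"
  shows "{z. \<gamma> ^ j * z = 0} = (\<lambda>ts. \<gamma> ^ (s - j) * adic_value ts) ` T_lists j"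
proof (intro equalityI subsetI)
  have pow_s: "\<gamma> ^ j * \<gamma> ^ (s - j) = 0"
    using assms nilpotent by (simp flip: power_add)
  fix z assume "z \<in> {z. \<gamma> ^ j * z = 0}"
  define ds where "ds = digits T \<gamma> s z"
  define us ts where "us = take (s - j) ds" and "ts = drop (s - j) ds"
  have ds: "set ds \<subseteq> T" "length ds = s"
    using digits_in_T_lists by (simp_all add: ds_def T_lists_def)
  have "length us = s - j"
    using ds(2) by (simp add: us_def)
  have "z = adic_value (us @ ts)"
    by (simp add: us_def ts_def ds_def adic_value_digits)
  also have "\<dots> = adic_value us + \<gamma> ^ (s - j) * adic_value ts"
    by (simp add: adic_value_append \<open>length us = s - j\<close>)
  finally have z: "z = adic_value us + \<gamma> ^ (s - j) * adic_value ts" .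
  then have "\<gamma> ^ j * z = \<gamma> ^ j * adic_value us"
    using pow_s by (simp add: distrib_left flip: mult.assoc)
  then have "\<gamma> ^ j * adic_value us = \<gamma> ^ j * adic_value (replicate (s - j) 0)"
    using \<open>z \<in> {z. \<gamma> ^ j * z = 0}\<close> by simp
  then have "us = replicate (s - j) 0"
    using ds assms zero_in_T
    by (intro adic_value_cancel) (auto simp: us_def dest: in_set_takeD)
  moreover have "ts \<in> T_lists j"
    using ds assms by (auto simp: ts_def T_lists_def dest: in_set_dropD)
  ultimately show "z \<in> (\<lambda>ts. \<gamma> ^ (s - j) * adic_value ts) ` T_lists j"
    using z by simp
next
  fix z assume "z \<in> (\<lambda>ts. \<gamma> ^ (s - j) * adic_value ts) ` T_lists j"
  then show "z \<in> {z. \<gamma> ^ j * z = 0}"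
    using assms nilpotent by (auto simp flip: power_add mult.assoc)
qed

lemma card_annihilator_pow:
  assumes "j \<le> s"
  shows "card {z. \<gamma> ^ j * z = 0} = q ^ j"
proof -
  have "inj_on (\<lambda>ts. \<gamma> ^ (s - j) * adic_value ts) (T_lists j)"
    using assms by (intro inj_onI adic_value_cancel) (auto simp: T_lists_def)
  then show ?thesis
    by (simp add: annihilator_pow_eq[OF assms] card_image card_T_lists)
qed

lemma card_mult_pow_eq:
  assumes "j \<le> s" "\<gamma> ^ j dvd x"
  shows "card {r. \<gamma> ^ j * r = x} = q ^ j"
proof -
  obtain y where y: "x = \<gamma> ^ j * y"
    using assms(2) by (auto elim: dvdE)
  then have "{r. \<gamma> ^ j * r = x} = (\<lambda>z. z + y) ` {z. \<gamma> ^ j * z = 0}"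
    by (auto simp: algebra_simps intro: image_eqI[of _ _ "r - y" for r])
  then show ?thesis
    using card_annihilator_pow[OF assms(1)] by (simp add: card_image)
qed

end

theorem lemma3p6:
  fixes \<gamma> :: "'a::{comm_ring_1,finite}"
    and s q :: nat
    and e :: "nat \<Rightarrow> 'a"
    and k i j :: nat
  assumes chain: "chain_ring TYPE('a)"
    and maxl: "maximal_ideal (pideal \<gamma>)"
    and nilp: "\<gamma> ^ s = 0" "\<forall>t<s. \<gamma> ^ t \<noteq> 0"
    and e_inj: "inj_on e {..<q}"
    and reps: "\<forall>x. \<exists>!t. t \<in> e ` {..<q} \<and> x - t \<in> pideal \<gamma>"
    and e01: "e 0 = 0" "e 1 = 1"
    and k: "k \<ge> 1"
    and i: "1 \<le> i" "i \<le> k"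
    and j: "j < s"
  shows "\<forall>x \<in> pideal (\<gamma> ^ j).
           card {c. c < q ^ (s * k) \<and> \<gamma> ^ j * Gmat (rho e q \<gamma> s) (q ^ s) k i c = x}
             = q ^ (j + s * (k - 1))"
proof
  interpret chain_ring_digits \<gamma> s q e
    using chain maxl nilp e_inj reps e01(1) by unfold_locales
  fix x assume "x \<in> pideal (\<gamma> ^ j)"
  have "card {c. c < q ^ (s * k) \<and> \<gamma> ^ j * Gmat (rho e q \<gamma> s) (q ^ s) k i c = x}
      = (q ^ s) ^ (k - 1) * card {m. m < q ^ s \<and> \<gamma> ^ j * rho e q \<gamma> s m = x}"
    using card_Gmat_row[of "q ^ s" i k] q_pos i by (simp add: power_mult)
  also have "\<dots> = (q ^ s) ^ (k - 1) * q ^ j"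
    using card_rho_preimage[of "\<lambda>v. \<gamma> ^ j * v = x"] card_mult_pow_eq j \<open>x \<in> pideal (\<gamma> ^ j)\<close>
    by simp
  finally show "card {c. c < q ^ (s * k) \<and> \<gamma> ^ j * Gmat (rho e q \<gamma> s) (q ^ s) k i c = x}
      = q ^ (j + s * (k - 1))"
    by (simp add: power_add power_mult)
qed

end
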